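(* Let $L=[l_{ij}]\in\mathbb R^{m\times m}$ be symmetric with all row sums equal to zero and with $0$ a simple eigenvalue. Let $r\in[0,\pi/2)$ and let $\tilde L^r$ be as defined in the context. Let $\chi_1$ and $\chi_2$ be the smallest eigenvalues of $L$ and of $\tilde L^r$, respectively, on the subspace $\{x\in\mathbb R^m: \mathbf 1^\top x=0\}$ (the orthogonal complement of $\mathbf 1=(1,\dots,1)^\top$). Then $\chi_1\ge\chi_2$.
   Context: For a real symmetric $m\times m$ matrix $M=[m_{ij}]$ with zero row sums and $r\in[0,\pi/2)$, the matrix $\tilde M^r=[\tilde m^r_{ij}]$ is defined by: for $i\ne j$, $\tilde m^r_{ij}=m_{ij}\cos r$ if $m_{ij}\le 0$ and $\tilde m^r_{ij}=m_{ij}$ if $m_{ij}>0$; and $\tilde m^r_{ii}=-\sum_{k\ne i}\tilde m^r_{ik}$. Both $L$ and $\tilde L^r$ are symmetric and leave $\{x:\mathbf 1^\top x=0\}$ invariant. *)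

theory Defs
  imports "HOL-Analysis.Analysis"
begin

definition tilde_mat :: "real \<Rightarrow> real^'n^'n \<Rightarrow> real^'n^'n" where
  "tilde_mat r M = (\<chi> i j. if i \<noteq> j then (if M $ i $ j \<le> 0 then M $ i $ j * cos r else M $ i $ j)
      else - (\<Sum>k\<in>UNIV - {i}. (if M $ i $ k \<le> 0 then M $ i $ k * cos r else M $ i $ k)))"

definition ones_perp :: "(real^'n) set" where
  "ones_perp = {x. (\<Sum>i\<in>UNIV. x $ i) = 0}"

definition eigvals_on_perp :: "real^'n^'n \<Rightarrow> real set" where
  "eigvals_on_perp M = {c. \<exists>x. x \<in> ones_perp \<and> x \<noteq> 0 \<and> M *v x = c *\<^sub>R x}"

definition symmetric_mat :: "real^'n^'n \<Rightarrow> bool" where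
  "symmetric_mat M \<longleftrightarrow> transpose M = M"

definition zero_row_sums :: "real^'n^'n \<Rightarrow> bool" where
  "zero_row_sums M \<longleftrightarrow> (\<forall>i. (\<Sum>j\<in>UNIV. M $ i $ j) = 0)"

text \<open>0 is a simple eigenvalue (for symmetric matrices algebraic = geometric multiplicity).\<close>
definition zero_simple_eigenvalue :: "real^'n^'n \<Rightarrow> bool" where
  "zero_simple_eigenvalue M \<longleftrightarrow> dim {x. M *v x = 0} = 1"

end

theory Submission
  imports Defs
begin

text \<open>Both smallest eigenvalues on the complement of the all-ones vector are minima of
  Rayleigh quotients there. Entrywise, L - tilde_mat r L vanishes on positive off-diagonal
  entries and equals (1 - cos r) times the nonpositive ones, so it is itself a symmetric matrix
  with zero row sums and nonpositive off-diagonal entries, i.e. a weighted graph Laplacian, and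
  hence positive semidefinite. Thus the quadratic form of tilde_mat r L is dominated by that of
  L, and evaluating at an eigenvector of L for its smallest eigenvalue gives the claim.\<close>

lemma symmetric_mat_entry: "symmetric_mat M \<Longrightarrow> M $ i $ j = M $ j $ i"
  unfolding symmetric_mat_def by (metis transpose_def vec_lambda_beta)

lemma inner_matrix_vector_mult_sum:
  "x \<bullet> (M *v y) = (\<Sum>i\<in>UNIV. \<Sum>j\<in>UNIV. M $ i $ j * x $ i * y $ j)"
  by (simp add: inner_vec_def matrix_vector_mult_def sum_distrib_left mult_ac)

lemma symmetric_mat_inner_commute:
  assumes "symmetric_mat M"
  shows "x \<bullet> (M *v y) = y \<bullet> (M *v x)"
proof -
  have "x \<bullet> (M *v y) = (\<Sum>j\<in>UNIV. \<Sum>i\<in>UNIV. M $ i $ j * x $ i * y $ j)"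
    by (simp add: inner_matrix_vector_mult_sum sum.swap[of "\<lambda>i j. M $ i $ j * x $ i * y $ j"])
  also have "\<dots> = (\<Sum>j\<in>UNIV. \<Sum>i\<in>UNIV. M $ j $ i * y $ j * x $ i)"
    using symmetric_mat_entry[OF assms] by (simp add: mult_ac)
  finally show ?thesis by (simp add: inner_matrix_vector_mult_sum)
qed

lemma subspace_ones_perp: "subspace ones_perp"
  unfolding subspace_def ones_perp_def by (simp add: sum.distrib sum_distrib_left[symmetric])

lemma matrix_vector_mult_in_ones_perp:
  assumes "symmetric_mat M" "zero_row_sums M"
  shows "M *v x \<in> ones_perp"
proof -
  have "(\<Sum>i\<in>UNIV. (M *v x) $ i) = (\<Sum>j\<in>UNIV. \<Sum>i\<in>UNIV. M $ i $ j * x $ j)"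
    by (simp add: matrix_vector_mult_def sum.swap[of "\<lambda>i j. M $ i $ j * x $ j"])
  also have "\<dots> = (\<Sum>j\<in>UNIV. x $ j * (\<Sum>i\<in>UNIV. M $ j $ i))"
    using symmetric_mat_entry[OF assms(1)] by (simp add: sum_distrib_left mult_ac)
  also have "\<dots> = 0" using assms(2) by (simp add: zero_row_sums_def)
  finally show ?thesis by (simp add: ones_perp_def)
qed

lemma laplacian_quadratic_form_nonneg:
  fixes D :: "'n::finite \<Rightarrow> 'n \<Rightarrow> real"
  assumes sym: "\<And>i j. D i j = D j i" and row_sums: "\<And>i. (\<Sum>j\<in>UNIV. D i j) = 0"
    and off_diag: "\<And>i j. i \<noteq> j \<Longrightarrow> D i j \<le> 0"
  shows "(\<Sum>i\<in>UNIV. \<Sum>j\<in>UNIV. D i j * x i * x j) \<ge> 0"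
proof -
  have col_sums: "(\<Sum>i\<in>UNIV. D i j) = 0" for j
    using row_sums[of j] sym by simp
  have "(\<Sum>i\<in>UNIV. \<Sum>j\<in>UNIV. D i j * (x i - x j)^2)
    = (\<Sum>i\<in>UNIV. x i ^2 * (\<Sum>j\<in>UNIV. D i j)) - 2 * (\<Sum>i\<in>UNIV. \<Sum>j\<in>UNIV. D i j * x i * x j)
      + (\<Sum>j\<in>UNIV. x j ^2 * (\<Sum>i\<in>UNIV. D i j))"
    by (simp add: power2_diff algebra_simps sum.distrib sum_subtractf sum_distrib_left
        sum_distrib_right sum.swap[of "\<lambda>i j. D i j * (x j)\<^sup>2"])
  also have "\<dots> = - 2 * (\<Sum>i\<in>UNIV. \<Sum>j\<in>UNIV. D i j * x i * x j)"
    by (simp add: row_sums col_sums)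
  finally have "(\<Sum>i\<in>UNIV. \<Sum>j\<in>UNIV. D i j * x i * x j)
      = - (\<Sum>i\<in>UNIV. \<Sum>j\<in>UNIV. D i j * (x i - x j)^2) / 2"
    by simp
  moreover have "(\<Sum>i\<in>UNIV. \<Sum>j\<in>UNIV. D i j * (x i - x j)^2) \<le> 0"
    by (intro sum_nonpos) (metis mult_nonpos_nonneg zero_le_power2 diff_self power2_eq_square
        mult_zero_right mult_zero_left off_diag)
  ultimately show ?thesis by simp
qed

text \<open>Eigenvectors of distinct eigenvalues are orthogonal, hence independent, so a choice of one
  eigenvector per eigenvalue injects the eigenvalues into a finite set.\<close>
lemma symmetric_mat_finite_eigenvalues:
  assumes sym: "symmetric_mat M"
  shows "finite {c. \<exists>x. x \<noteq> 0 \<and> M *v x = c *\<^sub>R (x::real^'n)}" (is "finite ?E")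
proof -
  define v where "v c = (SOME x. x \<noteq> 0 \<and> M *v x = c *\<^sub>R x)" for c
  have v: "v c \<noteq> 0 \<and> M *v v c = c *\<^sub>R v c" if "c \<in> ?E" for c
    using that unfolding v_def by (smt (verit) mem_Collect_eq someI_ex)
  have inj: "inj_on v ?E"
  proof (rule inj_onI)
    fix a b assume a: "a \<in> ?E" and b: "b \<in> ?E" and "v a = v b"
    then have "a *\<^sub>R v a = b *\<^sub>R v a" using v[OF a] v[OF b] by metis
    then show "a = b" using v[OF a] by (simp add: scaleR_cancel_right)
  qed
  have "pairwise orthogonal (v ` ?E)"
  proof (unfold pairwise_def, intro ballI impI)
    fix p q assume "p \<in> v ` ?E" "q \<in> v ` ?E" "p \<noteq> q"
    then obtain a b where a: "a \<in> ?E" and b: "b \<in> ?E" and pq: "p = v a" "q = v b" "a \<noteq> b"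
      by blast
    have "a * (v a \<bullet> v b) = v b \<bullet> (M *v v a)" using v[OF a] by (simp add: inner_commute)
    also have "\<dots> = v a \<bullet> (M *v v b)" by (rule symmetric_mat_inner_commute[OF sym])
    also have "\<dots> = b * (v a \<bullet> v b)" using v[OF b] by simp
    finally show "orthogonal p q" using pq by (simp add: orthogonal_def)
  qed
  moreover have "0 \<notin> v ` ?E" using v by force
  ultimately have "finite (v ` ?E)"
    using pairwise_orthogonal_independent independent_imp_finite by blast
  then show ?thesis using inj finite_imageD by blast
qed

lemma quadratic_form_attains_min_on_subspace:
  fixes M :: "real^'n^'n"
  assumes V: "subspace V" and "x \<in> V" "x \<noteq> 0"
  obtains x0 where "x0 \<in> V" "norm x0 = 1"
    "\<And>y. y \<in> V \<Longrightarrow> (x0 \<bullet> (M *v x0)) * (y \<bullet> y) \<le> y \<bullet> (M *v y)"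
proof -
  define S where "S = V \<inter> sphere 0 1"
  have "compact S"
    using compact_Int_closed[OF compact_sphere closed_subspace[OF V]] by (simp add: S_def Int_commute)
  moreover have "x /\<^sub>R norm x \<in> S"
    using assms by (simp add: S_def subspace_scale)
  moreover have "continuous_on S (\<lambda>x. x \<bullet> (M *v x))"
    by (intro continuous_intros linear_continuous_on matrix_vector_mul_linear)
  ultimately obtain x0 where x0: "x0 \<in> S" and min: "\<And>u. u \<in> S \<Longrightarrow> x0 \<bullet> (M *v x0) \<le> u \<bullet> (M *v u)"
    using continuous_attains_inf[of S] by blast
  have "(x0 \<bullet> (M *v x0)) * (y \<bullet> y) \<le> y \<bullet> (M *v y)" if y: "y \<in> V" "y \<noteq> 0" for y
  proof -
    have "x0 \<bullet> (M *v x0) \<le> (y /\<^sub>R norm y) \<bullet> (M *v (y /\<^sub>R norm y))"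
      using y by (intro min) (simp add: S_def subspace_scale[OF V])
    also have "\<dots> = (y \<bullet> (M *v y)) / (y \<bullet> y)"
      by (simp add: matrix_vector_mult_scaleR dot_square_norm power2_eq_square field_simps)
    finally show ?thesis using y by (simp add: field_simps)
  qed
  then show thesis
    using that x0 by (metis S_def IntD1 IntD2 inner_zero_left mem_sphere_0 mult_zero_right order_refl)
qed

lemma linear_plus_quadratic_nonneg_imp_zero:
  fixes a b :: real
  assumes "\<And>t. 0 \<le> t * a + t^2 * b"
  shows "a = 0"
proof (rule ccontr)
  assume "a \<noteq> 0"
  define B where "B = \<bar>b\<bar> + 1"
  have "B > 0" "b - B < 0" by (auto simp: B_def)
  define t where "t = - a / B"
  have "t * a + t^2 * b = a^2 * (b - B) / B^2"
    using \<open>B > 0\<close> by (simp add: t_def power2_eq_square field_simps)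
  also have "\<dots> < 0"
    using \<open>a \<noteq> 0\<close> \<open>B > 0\<close> \<open>b - B < 0\<close> by (intro divide_neg_pos mult_pos_neg) auto
  finally show False using assms[of t] by simp
qed

text \<open>Perturbing the minimiser x0 in the direction of the residual w = M x0 - c x0 changes the
  nonnegative form y \<mapsto> y \<bullet> (M *v y) - c * (y \<bullet> y) by 2 t (w \<bullet> w) + O(t^2).\<close>
lemma symmetric_mat_rayleigh_minimiser_eigenvector:
  fixes M :: "real^'n^'n"
  assumes sym: "symmetric_mat M" and V: "subspace V" and invariant: "\<And>y. y \<in> V \<Longrightarrow> M *v y \<in> V"
    and "x0 \<in> V" and x0_value: "x0 \<bullet> (M *v x0) = c * (x0 \<bullet> x0)"
    and bound: "\<And>y. y \<in> V \<Longrightarrow> c * (y \<bullet> y) \<le> y \<bullet> (M *v y)"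
  shows "M *v x0 = c *\<^sub>R x0"
proof -
  define w where "w = M *v x0 - c *\<^sub>R x0"
  define b where "b = w \<bullet> (M *v w) - c * (w \<bullet> w)"
  have "w \<in> V"
    unfolding w_def using \<open>x0 \<in> V\<close> invariant by (simp add: subspace_diff[OF V] subspace_scale[OF V])
  have "0 \<le> t * (2 * (w \<bullet> w)) + t^2 * b" for t
  proof -
    have "x0 + t *\<^sub>R w \<in> V" using \<open>x0 \<in> V\<close> \<open>w \<in> V\<close> by (simp add: subspace_add[OF V] subspace_scale[OF V])
    from bound[OF this] show ?thesis
      using symmetric_mat_inner_commute[OF sym, of x0 w] x0_value
      by (simp add: b_def w_def matrix_vector_right_distrib matrix_vector_mult_scaleR inner_add_left
          inner_add_right inner_diff_left inner_diff_right inner_commute power2_eq_square algebra_simps)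
  qed
  then have "w \<bullet> w = 0" using linear_plus_quadratic_nonneg_imp_zero by fastforce
  then show ?thesis by (simp add: w_def)
qed

lemma Min_eigvals_on_perp:
  fixes M :: "real^'n^'n" and x :: "real^'n"
  assumes sym: "symmetric_mat M" and row_sums: "zero_row_sums M"
    and nontrivial: "x \<in> ones_perp" "x \<noteq> 0"
  shows "Min (eigvals_on_perp M) \<in> eigvals_on_perp M"
    and "\<And>y. y \<in> ones_perp \<Longrightarrow> Min (eigvals_on_perp M) * (y \<bullet> y) \<le> y \<bullet> (M *v y)"
proof -
  obtain x0 where "x0 \<in> ones_perp" "norm x0 = 1"
    and bound: "\<And>y. y \<in> ones_perp \<Longrightarrow> (x0 \<bullet> (M *v x0)) * (y \<bullet> y) \<le> y \<bullet> (M *v y)"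
    using quadratic_form_attains_min_on_subspace[OF subspace_ones_perp nontrivial] by blast
  define c where "c = x0 \<bullet> (M *v x0)"
  have "x0 \<bullet> x0 = 1" using \<open>norm x0 = 1\<close> by (simp add: dot_square_norm)
  then have "M *v x0 = c *\<^sub>R x0"
    using bound unfolding c_def
    by (intro symmetric_mat_rayleigh_minimiser_eigenvector[OF sym subspace_ones_perp
          matrix_vector_mult_in_ones_perp[OF sym row_sums] \<open>x0 \<in> ones_perp\<close>]) simp_all
  moreover have "x0 \<noteq> 0" using \<open>norm x0 = 1\<close> by auto
  ultimately have c: "c \<in> eigvals_on_perp M"
    using \<open>x0 \<in> ones_perp\<close> unfolding eigvals_on_perp_def by blast
  have "finite (eigvals_on_perp M)"
    by (rule finite_subset[OF _ symmetric_mat_finite_eigenvalues[OF sym]])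
       (auto simp: eigvals_on_perp_def)
  moreover have "c \<le> e" if e: "e \<in> eigvals_on_perp M" for e
  proof -
    obtain y where y: "y \<in> ones_perp" "y \<noteq> 0" "M *v y = e *\<^sub>R y"
      using e unfolding eigvals_on_perp_def by blast
    have "c * (y \<bullet> y) \<le> y \<bullet> (M *v y)" using bound[OF y(1)] by (simp only: c_def)
    also have "\<dots> = e * (y \<bullet> y)" using y(3) by simp
    finally have "c * (y \<bullet> y) \<le> e * (y \<bullet> y)" .
    then show "c \<le> e" using y by simp
  qed
  ultimately have "Min (eigvals_on_perp M) = c" using c by (intro Min_eqI)
  then show "Min (eigvals_on_perp M) \<in> eigvals_on_perp M"
    and "\<And>y. y \<in> ones_perp \<Longrightarrow> Min (eigvals_on_perp M) * (y \<bullet> y) \<le> y \<bullet> (M *v y)"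
    using c bound unfolding c_def by simp_all
qed

definition damp_nonpos :: "real \<Rightarrow> real \<Rightarrow> real" where
  "damp_nonpos r z = (if z \<le> 0 then z * cos r else z)"

lemma tilde_mat_entry:
  "tilde_mat r M $ i $ j =
    (if i \<noteq> j then damp_nonpos r (M $ i $ j) else - (\<Sum>k\<in>UNIV - {i}. damp_nonpos r (M $ i $ k)))"
  by (cases "i = j") (simp_all add: tilde_mat_def damp_nonpos_def)

lemma symmetric_mat_tilde_mat: "symmetric_mat M \<Longrightarrow> symmetric_mat (tilde_mat r M)"
  unfolding symmetric_mat_def
  by (simp add: vec_eq_iff transpose_def tilde_mat_entry symmetric_mat_entry eq_commute)

lemma zero_row_sums_tilde_mat: "zero_row_sums (tilde_mat r M)"
  unfolding zero_row_sums_def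
proof
  fix i
  have "(\<Sum>j\<in>UNIV - {i}. tilde_mat r M $ i $ j) = (\<Sum>j\<in>UNIV - {i}. damp_nonpos r (M $ i $ j))"
    by (intro sum.cong) (auto simp: tilde_mat_entry)
  then show "(\<Sum>j\<in>UNIV. tilde_mat r M $ i $ j) = 0"
    by (simp add: sum.remove[of UNIV i] tilde_mat_entry)
qed

lemma quadratic_form_tilde_mat_le:
  fixes L :: "real^'n^'n"
  assumes sym: "symmetric_mat L" and row_sums: "zero_row_sums L"
  shows "x \<bullet> (tilde_mat r L *v x) \<le> x \<bullet> (L *v x)"
proof -
  define D where "D i j = L $ i $ j - tilde_mat r L $ i $ j" for i j
  have "0 \<le> (\<Sum>i\<in>UNIV. \<Sum>j\<in>UNIV. D i j * x $ i * x $ j)"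
  proof (rule laplacian_quadratic_form_nonneg)
    show "D i j = D j i" for i j
      using symmetric_mat_entry[OF sym] symmetric_mat_entry[OF symmetric_mat_tilde_mat[OF sym]]
      by (simp add: D_def)
    show "(\<Sum>j\<in>UNIV. D i j) = 0" for i
      using row_sums zero_row_sums_tilde_mat[of r L]
      by (simp add: D_def sum_subtractf zero_row_sums_def)
    show "D i j \<le> 0" if "i \<noteq> j" for i j
      using that mult_left_mono_neg[OF cos_le_one, of "L $ i $ j" r]
      by (simp add: D_def tilde_mat_entry damp_nonpos_def)
  qed
  also have "\<dots> = x \<bullet> (L *v x) - x \<bullet> (tilde_mat r L *v x)"
    by (simp add: inner_matrix_vector_mult_sum D_def sum_subtractf[symmetric] algebra_simps)
  finally show ?thesis by simp
qed

theorem lemma2: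
  fixes L :: "real^'n^'n" and r :: real
  assumes "symmetric_mat L"
    and "zero_row_sums L"
    and "zero_simple_eigenvalue L"
    and "0 \<le> r" and "r < pi / 2"
  shows "Min (eigvals_on_perp L) \<ge> Min (eigvals_on_perp (tilde_mat r L))"
proof (cases "ones_perp = {0 :: real^'n}")
  case True
  then have "eigvals_on_perp L = {}" "eigvals_on_perp (tilde_mat r L) = {}"
    by (auto simp: eigvals_on_perp_def)
  then show ?thesis by simp
next
  case False
  then obtain z :: "real^'n" where z: "z \<in> ones_perp" "z \<noteq> 0"
    using subspace_0[OF subspace_ones_perp] by blast
  obtain x where x: "x \<in> ones_perp" "x \<noteq> 0" "L *v x = Min (eigvals_on_perp L) *\<^sub>R x"
    using Min_eigvals_on_perp(1)[OF assms(1,2) z] by (auto simp: eigvals_on_perp_def)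
  have "Min (eigvals_on_perp (tilde_mat r L)) * (x \<bullet> x) \<le> x \<bullet> (tilde_mat r L *v x)"
    by (rule Min_eigvals_on_perp(2)[OF symmetric_mat_tilde_mat[OF assms(1)]
          zero_row_sums_tilde_mat z x(1)])
  also have "\<dots> \<le> x \<bullet> (L *v x)" by (rule quadratic_form_tilde_mat_le[OF assms(1,2)])
  also have "\<dots> = Min (eigvals_on_perp L) * (x \<bullet> x)" using x by simp
  finally show ?thesis using x by simp
qed

end
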